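(* Let $(D,s,t,k)$ be a reduced instance of Rooted $k$-Distinct Branchings, let $(\hat T,\{B_x\})$ be the $s$-rooted cut decomposition of $D$, and let $\hat P=x_1\dots x_\ell$ be a degenerate path of $\hat T$. If $x_iu$ and $x_ju$ are two arcs of $A^+\cap R_t$ with $i<j$ (same head $u$), then $(D,s,t,k)$ is a positive instance if and only if $(D-x_ju,s,t,k)$ is a positive instance.
   Context: Digraphs are finite and without loops; paths are directed. An out-tree (in-tree) is an oriented tree with exactly one vertex of in-degree zero (out-degree zero), its root; an out-branching (in-branching) of $D$ is a spanning out-tree (in-tree). An instance $(D,s,t,k)$ of Rooted $k$-Distinct Branchings ($D$ a digraph, $s,t\in V(D)$, $k$ an integer) is positive if $D$ has an out-branching $T^+$ rooted at $s$ and an in-branching $T^-$ rooted at $t$ with $|A(T^+)\setminus A(T^-)|\ge k$. It is reduced if $D$ has an out-branching rooted at $s$, an in-branching rooted at $t$, and every arc of $D$ lies in some out-branching rooted at $s$ or in some in-branching rooted at $t$. $R_s$ is the set of arcs lying in no out-branching rooted at $s$, and $R_t$ the set of arcs lying in no in-branching rooted at $t$. A vertex $v$ is bi-reachable from $r$ if there are two internally vertex-disjoint directed paths from $r$ to $v$. For a digraph $H$ with at least two vertices and $r\in V(H)$ such that every vertex of $H$ is reachable from $r$, the diblock $B_r$ of $r$ in $H$ is the set of all vertices bi-reachable from $r$, together with $r$ and all out-neighbours of $r$. For $x\in B_r\setminus\{r\}$ let $X_x$ be the set of vertices $v\notin B_r$ such that every directed $r$–$v$ path intersects $B_r$ for the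 last time in $x$; $x$ is a bottleneck of $B_r$ if $X_x\ne\emptyset$. The $r$-rooted cut decomposition $(\hat T,\{B_x\}_{x\in V(\hat T)})$ of $H$ is defined recursively: $\hat T$ is a rooted tree with root $r$; the set associated with the root is $B_r$; the children of $r$ are the bottlenecks of $B_r$; for each bottleneck $x$, the subtree rooted at $x$ with its sets is the $x$-rooted cut decomposition of $H[X_x\cup\{x\}]$. $B_x$ is degenerate if $x$ is an internal node of $\hat T$ and $|B_x|=2$. A path $x_1\dots x_\ell$ in $\hat T$ is degenerate if it is a subpath of a root-to-leaf path of $\hat T$ (with $x_{i+1}$ a child of $x_i$) and every $B_{x_i}$ is degenerate. For such a path $\hat P$, $A^+$ is the set of arcs $x_iu$ of $D$ with $x_i\in V(\hat P)$ and $u\notin V(\hat P)$, $u\in B_y$ for some proper ancestor $y$ of $x_1$ in $\hat T$. *)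

theory Defs
  imports Main
begin

definition digraph :: "'a set \<Rightarrow> ('a \<times> 'a) set \<Rightarrow> bool" where
  "digraph V A \<longleftrightarrow> finite V \<and> A \<subseteq> V \<times> V \<and> (\<forall>(u,v)\<in>A. u \<noteq> v)"

definition oriented_tree :: "'a set \<Rightarrow> ('a \<times> 'a) set \<Rightarrow> bool" where
  "oriented_tree V T \<longleftrightarrow> finite V \<and> V \<noteq> {} \<and> T \<subseteq> V \<times> V \<and>
     (\<forall>(u,v)\<in>T. u \<noteq> v \<and> (v,u) \<notin> T) \<and>
     card T = card V - 1 \<and>
     (\<forall>u\<in>V. \<forall>v\<in>V. (u,v) \<in> (T \<union> T\<inverse>)\<^sup>*)"

definition out_branching :: "'a set \<Rightarrow> ('a \<times> 'a) set \<Rightarrow> 'a \<Rightarrow> ('a \<times> 'a) set \<Rightarrow> bool" where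
  "out_branching V A r T \<longleftrightarrow> T \<subseteq> A \<and> oriented_tree V T \<and>
     {v \<in> V. \<not> (\<exists>u. (u,v) \<in> T)} = {r}"

definition in_branching :: "'a set \<Rightarrow> ('a \<times> 'a) set \<Rightarrow> 'a \<Rightarrow> ('a \<times> 'a) set \<Rightarrow> bool" where
  "in_branching V A r T \<longleftrightarrow> T \<subseteq> A \<and> oriented_tree V T \<and>
     {v \<in> V. \<not> (\<exists>w. (v,w) \<in> T)} = {r}"

definition positive_instance :: "'a set \<Rightarrow> ('a \<times> 'a) set \<Rightarrow> 'a \<Rightarrow> 'a \<Rightarrow> int \<Rightarrow> bool" where
  "positive_instance V A s t k \<longleftrightarrow>
     (\<exists>Tp Tm. out_branching V A s Tp \<and> in_branching V A t Tm \<and> int (card (Tp - Tm)) \<ge> k)"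

definition reduced_instance :: "'a set \<Rightarrow> ('a \<times> 'a) set \<Rightarrow> 'a \<Rightarrow> 'a \<Rightarrow> bool" where
  "reduced_instance V A s t \<longleftrightarrow>
     (\<exists>T. out_branching V A s T) \<and> (\<exists>T. in_branching V A t T) \<and>
     (\<forall>a\<in>A. (\<exists>T. out_branching V A s T \<and> a \<in> T) \<or> (\<exists>T. in_branching V A t T \<and> a \<in> T))"

definition R_s :: "'a set \<Rightarrow> ('a \<times> 'a) set \<Rightarrow> 'a \<Rightarrow> ('a \<times> 'a) set" where
  "R_s V A s = {a \<in> A. \<not> (\<exists>T. out_branching V A s T \<and> a \<in> T)}"

definition R_t :: "'a set \<Rightarrow> ('a \<times> 'a) set \<Rightarrow> 'a \<Rightarrow> ('a \<times> 'a) set" where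
  "R_t V A t = {a \<in> A. \<not> (\<exists>T. in_branching V A t T \<and> a \<in> T)}"

definition dpath :: "'a set \<Rightarrow> ('a \<times> 'a) set \<Rightarrow> 'a list \<Rightarrow> 'a \<Rightarrow> 'a \<Rightarrow> bool" where
  "dpath V A p u v \<longleftrightarrow> p \<noteq> [] \<and> hd p = u \<and> last p = v \<and> distinct p \<and> set p \<subseteq> V \<and>
     (\<forall>i. Suc i < length p \<longrightarrow> (p ! i, p ! Suc i) \<in> A)"

definition bireachable :: "'a set \<Rightarrow> ('a \<times> 'a) set \<Rightarrow> 'a \<Rightarrow> 'a \<Rightarrow> bool" where
  "bireachable V A r v \<longleftrightarrow>
     (\<exists>p q. dpath V A p r v \<and> dpath V A q r v \<and> p \<noteq> q \<and> set p \<inter> set q = {r, v})"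

definition diblock :: "'a set \<Rightarrow> ('a \<times> 'a) set \<Rightarrow> 'a \<Rightarrow> 'a set" where
  "diblock V A r = {r} \<union> {v. (r,v) \<in> A} \<union> {v \<in> V. bireachable V A r v}"

definition Xset :: "'a set \<Rightarrow> ('a \<times> 'a) set \<Rightarrow> 'a \<Rightarrow> 'a \<Rightarrow> 'a set" where
  "Xset V A r x = {v \<in> V - diblock V A r.
     \<forall>p. dpath V A p r v \<longrightarrow> last (filter (\<lambda>w. w \<in> diblock V A r) p) = x}"

definition bottlenecks :: "'a set \<Rightarrow> ('a \<times> 'a) set \<Rightarrow> 'a \<Rightarrow> 'a set" where
  "bottlenecks V A r = {x \<in> diblock V A r - {r}. Xset V A r x \<noteq> {}}"

text \<open>The nodes of the decomposition tree are vertices. A decomposition is represented by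
  its node set N, a parent function par (meaningful on N minus the root) and the sets B.
  cut_decomp V A r N par B holds iff (N, par, B) is the r-rooted cut decomposition of (V, A).\<close>

inductive cut_decomp ::
  "'a set \<Rightarrow> ('a \<times> 'a) set \<Rightarrow> 'a \<Rightarrow> 'a set \<Rightarrow> ('a \<Rightarrow> 'a) \<Rightarrow> ('a \<Rightarrow> 'a set) \<Rightarrow> bool" where
  "\<lbrakk> finite V; 2 \<le> card V; r \<in> V;
     \<forall>v\<in>V. \<exists>p. dpath V A p r v;
     B r = diblock V A r;
     \<forall>x\<in>bottlenecks V A r. par x = r;
     \<forall>x\<in>bottlenecks V A r.
        cut_decomp (Xset V A r x \<union> {x})
                   (A \<inter> ((Xset V A r x \<union> {x}) \<times> (Xset V A r x \<union> {x}))) x (Nx x) par B;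
     N = {r} \<union> (\<Union>x\<in>bottlenecks V A r. Nx x) \<rbrakk>
   \<Longrightarrow> cut_decomp V A r N par B"

definition tree_edges :: "'a set \<Rightarrow> ('a \<Rightarrow> 'a) \<Rightarrow> 'a \<Rightarrow> ('a \<times> 'a) set" where
  "tree_edges N par r = {(par x, x) | x. x \<in> N - {r}}"

definition internal_node :: "'a set \<Rightarrow> ('a \<Rightarrow> 'a) \<Rightarrow> 'a \<Rightarrow> 'a \<Rightarrow> bool" where
  "internal_node N par r x \<longleftrightarrow> x \<in> N \<and> (\<exists>c. (x, c) \<in> tree_edges N par r)"

definition degenerate_node :: "'a set \<Rightarrow> ('a \<Rightarrow> 'a) \<Rightarrow> ('a \<Rightarrow> 'a set) \<Rightarrow> 'a \<Rightarrow> 'a \<Rightarrow> bool" where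
  "degenerate_node N par B r x \<longleftrightarrow> internal_node N par r x \<and> card (B x) = 2"

definition degenerate_path ::
  "'a set \<Rightarrow> ('a \<Rightarrow> 'a) \<Rightarrow> ('a \<Rightarrow> 'a set) \<Rightarrow> 'a \<Rightarrow> 'a list \<Rightarrow> bool" where
  "degenerate_path N par B r xs \<longleftrightarrow> xs \<noteq> [] \<and> set xs \<subseteq> N \<and>
     (\<forall>i. Suc i < length xs \<longrightarrow> (xs ! i, xs ! Suc i) \<in> tree_edges N par r) \<and>
     (\<forall>x\<in>set xs. degenerate_node N par B r x)"

definition Aplus ::
  "('a \<times> 'a) set \<Rightarrow> 'a set \<Rightarrow> ('a \<Rightarrow> 'a) \<Rightarrow> ('a \<Rightarrow> 'a set) \<Rightarrow> 'a \<Rightarrow> 'a list \<Rightarrow> ('a \<times> 'a) set" where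
  "Aplus A N par B r xs = {(x, u) \<in> A. x \<in> set xs \<and> u \<notin> set xs \<and>
     (\<exists>y. (y, hd xs) \<in> (tree_edges N par r)\<^sup>+ \<and> u \<in> B y)}"

end

theory Submission
  imports Defs "HOL-Library.Transitive_Closure_Table"
begin

text \<open>
  Arcs of \<open>R_t\<close> lie in no in-branching rooted at \<open>t\<close>, so deleting \<open>x\<^sub>j u\<close> can only hurt
  an out-branching \<open>T\<^sup>+\<close> that uses it. Along a path of the cut decomposition every node
  dominates its children: each \<open>s\<close>-path to a child passes through its parent. Hence \<open>x\<^sub>i\<close>
  dominates \<open>x\<^sub>j\<close>, so \<open>x\<^sub>i\<close> is an ancestor of \<open>x\<^sub>j\<close> in \<open>T\<^sup>+\<close>, and exchanging \<open>x\<^sub>j u\<close> for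
  \<open>x\<^sub>i u\<close> yields an out-branching of \<open>D - x\<^sub>j u\<close>; as \<open>x\<^sub>i u\<close> is also missing from \<open>T\<^sup>-\<close>, the
  number of arcs of \<open>T\<^sup>+\<close> outside \<open>T\<^sup>-\<close> is unchanged.

  Dominance of parents rests on one fact about a diblock \<open>B\<^sub>r\<close>: a vertex reached from
  \<open>x \<in> B\<^sub>r\<close> by a path leaving \<open>B\<^sub>r\<close> cannot be reached from \<open>r\<close> avoiding \<open>x\<close>, since such a
  detour together with the two disjoint \<open>r\<close>-\<open>x\<close> paths would make it bi-reachable from \<open>r\<close>.
\<close>

fun walk :: "('a \<times> 'a) set \<Rightarrow> 'a list \<Rightarrow> bool" where
  "walk A [] = True"
| "walk A [x] = True"
| "walk A (x # y # r) = ((x, y) \<in> A \<and> walk A (y # r))"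

lemma walk_iff_nth: "walk A p \<longleftrightarrow> (\<forall>i. Suc i < length p \<longrightarrow> (p ! i, p ! Suc i) \<in> A)"
proof (induction A p rule: walk.induct)
  case (3 A x y r)
  have "(\<forall>i. Suc i < length (x # y # r) \<longrightarrow> P i) \<longleftrightarrow>
        P 0 \<and> (\<forall>i. Suc i < length (y # r) \<longrightarrow> P (Suc i))" for P
    by (metis All_less_Suc2 Suc_less_eq length_Cons)
  then show ?case using 3 by simp
qed auto

lemma dpath_iff_walk:
  "dpath V A p a b \<longleftrightarrow>
     p \<noteq> [] \<and> hd p = a \<and> last p = b \<and> distinct p \<and> set p \<subseteq> V \<and> walk A p"
  unfolding dpath_def walk_iff_nth by blast

lemma walk_append_iff: "walk A (xs @ y # ys) \<longleftrightarrow> walk A (xs @ [y]) \<and> walk A (y # ys)"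
  by (induction A xs rule: walk.induct) auto

lemma walk_mono: "walk A p \<Longrightarrow> A \<subseteq> A' \<Longrightarrow> walk A' p"
  by (induction A p rule: walk.induct) auto

lemma walk_Int_Times: "walk A p \<Longrightarrow> set p \<subseteq> S \<Longrightarrow> walk (A \<inter> S \<times> S) p"
  by (induction A p rule: walk.induct) auto

lemma walk_snoc: "p \<noteq> [] \<Longrightarrow> walk A p \<Longrightarrow> (last p, b) \<in> A \<Longrightarrow> walk A (p @ [b])"
  by (metis append_butlast_last_id append_Cons append_Nil append_assoc walk.simps(2,3)
      walk_append_iff)

lemma walk_rtrancl: "walk T (z # q) \<Longrightarrow> (z, last (z # q)) \<in> T\<^sup>*"
  by (induction q arbitrary: z) (auto intro: converse_rtrancl_into_rtrancl)

lemma dpath_prefix: "dpath V A (p1 @ z # p2) a b \<Longrightarrow> dpath V A (p1 @ [z]) a z"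
  unfolding dpath_iff_walk walk_append_iff[of A p1 z p2] by (cases p1) auto

lemma dpath_suffix: "dpath V A (p1 @ z # p2) a b \<Longrightarrow> dpath V A (z # p2) z b"
  unfolding dpath_iff_walk walk_append_iff[of A p1 z p2] by auto

lemma split_dpath:
  assumes "dpath V A p a b" "z \<in> set p"
  obtains p1 p2 where "p = p1 @ z # p2" "dpath V A (p1 @ [z]) a z" "dpath V A (z # p2) z b"
  by (metis assms dpath_prefix dpath_suffix split_list)

lemma dpath_mono: "dpath V A p a b \<Longrightarrow> A \<subseteq> A' \<Longrightarrow> dpath V A' p a b"
  unfolding dpath_iff_walk using walk_mono by blast

lemma dpath_hd_in_set: "dpath V A p a b \<Longrightarrow> a \<in> set p"
  unfolding dpath_iff_walk by (auto intro: hd_in_set)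

lemma dpath_last_in_set: "dpath V A p a b \<Longrightarrow> b \<in> set p"
  unfolding dpath_iff_walk by (auto intro: last_in_set)

lemma split_list_last_filter:
  assumes "\<exists>x\<in>set p. P x"
  shows "\<exists>p1 p2. p = p1 @ last (filter P p) # p2 \<and> P (last (filter P p)) \<and> (\<forall>z\<in>set p2. \<not> P z)"
proof -
  obtain p1 x p2 where p: "p = p1 @ x # p2" "P x" "\<forall>z\<in>set p2. \<not> P z"
    using split_list_last_prop[OF assms] by blast
  moreover have "last (filter P p) = x" using p by (simp add: filter_empty_conv)
  ultimately show ?thesis by metis
qed

section \<open>Dominance\<close>

definition dominates :: "'a set \<Rightarrow> ('a \<times> 'a) set \<Rightarrow> 'a \<Rightarrow> 'a \<Rightarrow> 'a \<Rightarrow> bool" where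
  "dominates V A r x v \<longleftrightarrow> (\<forall>p. dpath V A p r v \<longrightarrow> x \<in> set p)"

lemma dominates_refl: "dominates V A r x x"
  unfolding dominates_def using dpath_last_in_set by metis

lemma dominates_trans:
  assumes "dominates V A r a b" "dominates V A r b c" shows "dominates V A r a c"
  unfolding dominates_def
proof (intro allI impI)
  fix p assume p: "dpath V A p r c"
  then have "b \<in> set p" using assms(2) unfolding dominates_def by blast
  then obtain p1 p2 where "p = p1 @ b # p2" "dpath V A (p1 @ [b]) r b"
    using split_dpath[OF p] by blast
  then show "a \<in> set p" using assms(1) unfolding dominates_def by auto
qed

lemma dominates_antisym:
  assumes "dominates V A r a b" "dominates V A r b a" "dpath V A p r b" shows "a = b"
proof -
  have "a \<in> set p" using assms(1,3) unfolding dominates_def by blast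
  then obtain p1 p2 where p: "p = p1 @ a # p2" and pa: "dpath V A (p1 @ [a]) r a"
    using split_dpath[OF assms(3)] by blast
  have "b \<in> set (p1 @ [a])" using assms(2) pa unfolding dominates_def by blast
  moreover have "b = last p" "distinct p" using assms(3) unfolding dpath_iff_walk by auto
  ultimately show ?thesis using p by (cases p2 rule: rev_cases) auto
qed

lemma not_dominates_prefix:
  assumes "dpath V A p r b" "x \<notin> set p" "z \<in> set p" shows "\<not> dominates V A r x z"
proof -
  obtain p1 p2 where "p = p1 @ z # p2" "dpath V A (p1 @ [z]) r z"
    using split_dpath[OF assms(1,3)] by blast
  then show ?thesis using assms(2) unfolding dominates_def by auto
qed

lemma not_dominates_before:
  assumes "dpath V A q r x" "z \<in> set q" "z \<noteq> x" shows "\<not> dominates V A r x z"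
proof -
  obtain q1 q2 where q: "q = q1 @ z # q2" and qz: "dpath V A (q1 @ [z]) r z"
    using split_dpath[OF assms(1,2)] by blast
  have "x = last q" "distinct q" using assms(1) unfolding dpath_iff_walk by auto
  then have "x \<notin> set (q1 @ [z])" using q assms(3) by (cases q2 rule: rev_cases) auto
  then show ?thesis using qz unfolding dominates_def by blast
qed

lemma not_dominates_step:
  assumes "\<not> dominates V A r x a" "(a, b) \<in> A" "b \<in> V" "b \<noteq> x"
  shows "\<not> dominates V A r x b"
proof -
  obtain p where p: "dpath V A p r a" "x \<notin> set p" using assms(1) unfolding dominates_def by blast
  show ?thesis
  proof (cases "b \<in> set p")
    case True then show ?thesis using not_dominates_prefix p by metis
  next
    case False
    have "dpath V A (p @ [b]) r b"
      using p(1) False assms(2,3) unfolding dpath_iff_walk by (auto intro: walk_snoc)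
    then show ?thesis using p(2) assms(4) unfolding dominates_def by force
  qed
qed

lemma not_dominates_walk:
  "\<not> dominates V A r x a \<Longrightarrow> walk A (a # q) \<Longrightarrow> set q \<subseteq> V \<Longrightarrow> x \<notin> set q
   \<Longrightarrow> \<not> dominates V A r x (last (a # q))"
proof (induction q arbitrary: a)
  case (Cons b q)
  then have "\<not> dominates V A r x b" using not_dominates_step[of V A r x a b] by auto
  with Cons show ?case by auto
qed simp

section \<open>Diblocks\<close>

lemma diblock_subset: "A \<subseteq> V \<times> V \<Longrightarrow> r \<in> V \<Longrightarrow> diblock V A r \<subseteq> V"
  unfolding diblock_def by auto

lemma root_in_diblock: "r \<in> diblock V A r"
  unfolding diblock_def by simp

lemma diblock_two_paths:
  assumes "A \<subseteq> V \<times> V" "r \<in> V" "x \<in> diblock V A r" "x \<noteq> r"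
  obtains p1 p2 where "dpath V A p1 r x" "dpath V A p2 r x" "set p1 \<inter> set p2 = {r, x}"
proof (cases "(r, x) \<in> A")
  case True
  then have "dpath V A [r, x] r x" using assms unfolding dpath_iff_walk by auto
  then show ?thesis using that by fastforce
next
  case False
  then have "bireachable V A r x" using assms(3,4) unfolding diblock_def by auto
  then show ?thesis using that unfolding bireachable_def by blast
qed

lemma in_diblockI:
  "dpath V A p r y \<Longrightarrow> dpath V A q r y \<Longrightarrow> p \<noteq> q \<Longrightarrow> set p \<inter> set q = {r, y} \<Longrightarrow> y \<in> V
   \<Longrightarrow> y \<in> diblock V A r"
  unfolding diblock_def bireachable_def by blast

lemma dpath_via_dominated_path:
  assumes P2: "dpath V A P2 r x"
    and R: "dpath V A R x w" and R_dom: "\<forall>z\<in>set R. dominates V A r x z"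
    and wy: "(w, y) \<in> A" and yV: "y \<in> V" and yP2: "y \<notin> set P2" and yR: "y \<notin> set R"
  shows "dpath V A (P2 @ tl R @ [y]) r y" "set (P2 @ tl R @ [y]) = set P2 \<union> set R \<union> {y}"
proof -
  obtain R' where R': "R = x # R'" using R unfolding dpath_iff_walk by (cases R) auto
  obtain P2' where P2': "P2 = P2' @ [x]"
    using P2 unfolding dpath_iff_walk by (cases P2 rule: rev_cases) auto
  have "set P2 \<inter> set R' = {}"
  proof (rule ccontr)
    assume "set P2 \<inter> set R' \<noteq> {}"
    then obtain z where z: "z \<in> set P2" "z \<in> set R'" by blast
    have "z \<noteq> x" using z(2) R R' unfolding dpath_iff_walk by auto
    then show False using not_dominates_before[OF P2 z(1)] R_dom R' z(2) by auto
  qed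
  moreover have "walk A (P2 @ tl R @ [y])"
  proof -
    have "walk A (x # R' @ [y])"
      using walk_snoc[of R A y] R R' wy unfolding dpath_iff_walk by simp
    moreover have "walk A (P2' @ [x])" using P2 P2' unfolding dpath_iff_walk by simp
    ultimately show ?thesis using walk_append_iff[of A P2' x "R' @ [y]"] P2' R' by simp
  qed
  ultimately show "dpath V A (P2 @ tl R @ [y]) r y"
    using P2 R R' yV yP2 yR unfolding dpath_iff_walk by (auto simp: hd_append)
  show "set (P2 @ tl R @ [y]) = set P2 \<union> set R \<union> {y}"
    using R' dpath_last_in_set[OF P2] by auto
qed

text \<open>
  The detour: an \<open>r\<close>-\<open>y\<close> path \<open>P\<close> avoiding \<open>x\<close> whose last vertex on \<open>P1 \<union> P2 \<union> R\<close> is \<open>v \<in> P1\<close>.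
  Following \<open>P1\<close> to \<open>v\<close> and then \<open>P\<close>, and following \<open>P2\<close>, \<open>R\<close> and the arc \<open>w y\<close>, gives two
  internally disjoint \<open>r\<close>-\<open>y\<close> paths.
\<close>

lemma detour_in_diblock:
  assumes P1: "dpath V A P1 r x" and P2: "dpath V A P2 r x" and P12: "set P1 \<inter> set P2 = {r, x}"
    and R: "dpath V A R x w" and R_dom: "\<forall>z\<in>set R. dominates V A r x z"
    and wy: "(w, y) \<in> A" and yV: "y \<in> V" and yR: "y \<notin> set R" and yP2: "y \<notin> set P2"
    and P: "dpath V A P r y" and xP: "x \<notin> set P"
    and P_split: "P = p1 @ v # p2" and vP1: "v \<in> set P1"
    and p2_outside: "\<forall>z\<in>set p2. z \<notin> set P1 \<union> set P2 \<union> set R"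
  shows "y \<in> diblock V A r"
proof -
  have "v \<noteq> x" using xP P_split by auto
  obtain b1 b2 where b: "P1 = b1 @ v # b2" and b1: "dpath V A (b1 @ [v]) r v"
    using split_dpath[OF P1 vP1] by blast
  have "x = last P1" "distinct P1" using P1 unfolding dpath_iff_walk by auto
  then have x_b1: "x \<notin> set (b1 @ [v])" using b \<open>v \<noteq> x\<close> by (cases b2 rule: rev_cases) auto
  have v_p2: "dpath V A (v # p2) v y" using P unfolding P_split by (rule dpath_suffix)
  define \<alpha> where "\<alpha> = b1 @ v # p2"
  have "walk A \<alpha>" unfolding \<alpha>_def walk_append_iff[of A b1 v p2] using b1 v_p2 unfolding dpath_iff_walk by auto
  moreover have "distinct \<alpha>" unfolding \<alpha>_def using b1 v_p2 p2_outside b unfolding dpath_iff_walk by auto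
  ultimately have \<alpha>: "dpath V A \<alpha> r y"
    using b1 v_p2 unfolding \<alpha>_def dpath_iff_walk by (cases b1) auto
  have x\<alpha>: "x \<notin> set \<alpha>" using x_b1 xP P_split unfolding \<alpha>_def by auto
  define \<beta> where "\<beta> = P2 @ tl R @ [y]"
  have \<beta>: "dpath V A \<beta> r y" and set_\<beta>: "set \<beta> = set P2 \<union> set R \<union> {y}"
    using dpath_via_dominated_path[OF P2 R R_dom wy yV yP2 yR] unfolding \<beta>_def by auto
  have "set \<alpha> \<inter> set \<beta> \<subseteq> {r, y}"
  proof
    fix z assume z: "z \<in> set \<alpha> \<inter> set \<beta>"
    show "z \<in> {r, y}"
    proof (cases "z \<in> set p2")
      case True then show ?thesis using p2_outside z set_\<beta> by auto
    next
      case False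
      then have zP1: "z \<in> set P1" using z b unfolding \<alpha>_def by auto
      have "z \<noteq> x" using z x\<alpha> by auto
      then have "z \<notin> set R" using not_dominates_before[OF P1 zP1] R_dom by auto
      moreover have "z \<in> set P2 \<Longrightarrow> z = r" using zP1 P12 \<open>z \<noteq> x\<close> by auto
      ultimately show ?thesis using z set_\<beta> by auto
    qed
  qed
  moreover have "{r, y} \<subseteq> set \<alpha> \<inter> set \<beta>"
    using dpath_hd_in_set[OF \<alpha>] dpath_last_in_set[OF \<alpha>] dpath_hd_in_set[OF \<beta>]
      dpath_last_in_set[OF \<beta>] by blast
  ultimately have "set \<alpha> \<inter> set \<beta> = {r, y}" by blast
  moreover have "\<alpha> \<noteq> \<beta>" using x\<alpha> set_\<beta> dpath_hd_in_set[OF R] by blast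
  ultimately show ?thesis using in_diblockI[OF \<alpha> \<beta>] yV by blast
qed

lemma dominates_exit_vertex:
  assumes AV: "A \<subseteq> V \<times> V" and rV: "r \<in> V" and xB: "x \<in> diblock V A r" and xr: "x \<noteq> r"
    and R: "dpath V A R x w" and R_dom: "\<forall>z\<in>set R. dominates V A r x z"
    and wy: "(w, y) \<in> A" and yB: "y \<notin> diblock V A r"
  shows "dominates V A r x y"
proof (rule ccontr)
  assume "\<not> dominates V A r x y"
  then obtain P where P: "dpath V A P r y" "x \<notin> set P" unfolding dominates_def by blast
  have yV: "y \<in> V" using wy AV by auto
  have yR: "y \<notin> set R" using R_dom P unfolding dominates_def by blast
  obtain P1 P2 where P1: "dpath V A P1 r x" and P2: "dpath V A P2 r x"
    and P12: "set P1 \<inter> set P2 = {r, x}"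
    using diblock_two_paths[OF AV rV xB xr] by blast
  define S where "S = set P1 \<union> set P2 \<union> set R"
  have "r \<in> set P \<inter> S" using P1 P(1) dpath_hd_in_set unfolding S_def by fast
  then obtain p1 v p2 where P_split: "P = p1 @ v # p2" and vS: "v \<in> S"
    and p2_outside: "\<forall>z\<in>set p2. z \<notin> S"
    using split_list_last_prop[of P "\<lambda>z. z \<in> S"] by blast
  have "v \<notin> set R" using not_dominates_prefix[OF P] P_split R_dom by auto
  then have v: "v \<in> set P1 \<or> v \<in> set P2" using vS unfolding S_def by auto
  have y_v: "y = v" if "y \<in> S"
    using P that P_split p2_outside unfolding dpath_iff_walk by (cases p2 rule: rev_cases) auto
  have "y \<noteq> r" "y \<noteq> x" using yB root_in_diblock xB by metis+
  then have y_P12: "y \<notin> set P1 \<inter> set P2" using P12 by blast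
  from v show False
  proof
    assume vP1: "v \<in> set P1"
    then have "y \<notin> set P2" using y_v y_P12 unfolding S_def by blast
    then show False
      using detour_in_diblock[OF P1 P2 P12 R R_dom wy yV yR _ P P_split vP1] p2_outside yB
      unfolding S_def by blast
  next
    assume vP2: "v \<in> set P2"
    then have "y \<notin> set P1" using y_v y_P12 unfolding S_def by blast
    moreover have "set P2 \<inter> set P1 = {r, x}" using P12 by blast
    ultimately show False
      using detour_in_diblock[OF P2 P1 _ R R_dom wy yV yR _ P P_split vP2] p2_outside yB
      unfolding S_def by blast
  qed
qed

lemma dominates_diblock_exit_path:
  assumes AV: "A \<subseteq> V \<times> V" and rV: "r \<in> V" and xB: "x \<in> diblock V A r" and xr: "x \<noteq> r"
  shows "dpath V A Q x y \<Longrightarrow> \<forall>z\<in>set Q. z \<noteq> x \<longrightarrow> z \<notin> diblock V A r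
    \<Longrightarrow> \<forall>z\<in>set Q. dominates V A r x z"
proof (induction Q arbitrary: y rule: rev_induct)
  case Nil then show ?case by simp
next
  case (snoc a Q)
  show ?case
  proof (cases "Q = []")
    case True
    then have "a = x" using snoc.prems(1) unfolding dpath_iff_walk by simp
    then show ?thesis using True dominates_refl by simp
  next
    case False
    then obtain Q' b where Q: "Q = Q' @ [b]" by (cases Q rule: rev_cases) auto
    have Q_path: "dpath V A Q x b"
      using dpath_prefix[of V A Q' b "[a]" x y] snoc.prems(1) unfolding Q by simp
    have Q_dom: "\<forall>z\<in>set Q. dominates V A r x z" using snoc.IH[OF Q_path] snoc.prems(2) by simp
    have "(b, a) \<in> A"
      using snoc.prems(1) walk_append_iff[of A Q' b "[a]"] unfolding Q dpath_iff_walk by auto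
    moreover have "a \<noteq> x"
      using snoc.prems(1) dpath_hd_in_set[OF Q_path] unfolding dpath_iff_walk by auto
    then have "a \<notin> diblock V A r" using snoc.prems(2) by simp
    ultimately have "dominates V A r x a"
      using dominates_exit_vertex[OF AV rV xB xr Q_path Q_dom] by blast
    then show ?thesis using Q_dom by simp
  qed
qed

lemma last_diblock_vertex_eq:
  assumes AV: "A \<subseteq> V \<times> V" and rV: "r \<in> V" and xB: "x \<in> diblock V A r" and xr: "x \<noteq> r"
    and p: "dpath V A (p1 @ x # p2) r w" and p2_outside: "\<forall>z\<in>set p2. z \<notin> diblock V A r"
    and q: "dpath V A q r w"
  shows "last (filter (\<lambda>z. z \<in> diblock V A r) q) = x"
proof (rule ccontr)
  let ?B = "diblock V A r"
  define x' where "x' = last (filter (\<lambda>z. z \<in> ?B) q)"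
  assume "last (filter (\<lambda>z. z \<in> ?B) q) \<noteq> x"
  then have x'x: "x' \<noteq> x" unfolding x'_def .
  have "\<forall>z\<in>set (x # p2). dominates V A r x z"
    using dominates_diblock_exit_path[OF AV rV xB xr dpath_suffix[OF p]] p2_outside by simp
  then have w_dom: "dominates V A r x w" using dpath_last_in_set[OF dpath_suffix[OF p]] by blast
  then have xq: "x \<in> set q" using q unfolding dominates_def by blast
  have "\<exists>z\<in>set q. z \<in> ?B" using dpath_hd_in_set[OF q] root_in_diblock[of r V A] by blast
  then obtain q1 q2 where q_split: "q = q1 @ x' # q2" and x'B: "x' \<in> ?B"
    and q2_outside: "\<forall>z\<in>set q2. z \<notin> ?B"
    using split_list_last_filter[of q "\<lambda>z. z \<in> ?B"] unfolding x'_def[symmetric] by blast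
  have x_q2: "x \<notin> set q2" using q2_outside xB by blast
  then have "x \<in> set q1" using xq x'x q_split by auto
  moreover have "hd q = r" "distinct q" using q unfolding dpath_iff_walk by auto
  ultimately have "x' \<noteq> r" using q_split by (cases q1) auto
  then obtain P1 P2 where P: "dpath V A P1 r x'" "dpath V A P2 r x'" "set P1 \<inter> set P2 = {r, x'}"
    using diblock_two_paths[OF AV rV x'B] by blast
  have "x \<notin> set P1 \<or> x \<notin> set P2" using P(3) xr x'x by blast
  then have "\<not> dominates V A r x x'" using P(1,2) unfolding dominates_def by blast
  moreover have x'_q2: "dpath V A (x' # q2) x' w" using q unfolding q_split by (rule dpath_suffix)
  moreover have "walk A (x' # q2)" "set q2 \<subseteq> V" using x'_q2 unfolding dpath_iff_walk by auto
  ultimately have "\<not> dominates V A r x (last (x' # q2))" using not_dominates_walk x_q2 by metis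
  moreover have "last (x' # q2) = w" using q q_split unfolding dpath_iff_walk by simp
  ultimately show False using w_dom by simp
qed

lemma split_dpath_into_Xset:
  assumes AV: "A \<subseteq> V \<times> V" and rV: "r \<in> V" and xB: "x \<in> diblock V A r" and xr: "x \<noteq> r"
    and cX: "c \<in> Xset V A r x" and p: "dpath V A p r c"
  obtains p1 p2 where "p = p1 @ x # p2"
    "dpath (Xset V A r x \<union> {x}) (A \<inter> (Xset V A r x \<union> {x}) \<times> (Xset V A r x \<union> {x})) (x # p2) x c"
proof -
  let ?B = "diblock V A r" and ?X = "Xset V A r x \<union> {x}"
  have "\<exists>z\<in>set p. z \<in> ?B" using dpath_hd_in_set[OF p] root_in_diblock[of r V A] by blast
  moreover have "last (filter (\<lambda>z. z \<in> ?B) p) = x" using cX p unfolding Xset_def by auto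
  ultimately obtain p1 p2 where p_split: "p = p1 @ x # p2" and p2_outside: "\<forall>z\<in>set p2. z \<notin> ?B"
    using split_list_last_filter[of p "\<lambda>z. z \<in> ?B"] by auto
  have "set p2 \<subseteq> Xset V A r x"
  proof
    fix w assume "w \<in> set p2"
    then obtain s1 s2 where p2: "p2 = s1 @ w # s2" by (metis split_list)
    have "dpath V A ((p1 @ x # s1) @ w # s2) r c" using p unfolding p_split p2 by simp
    then have w_path: "dpath V A (p1 @ x # s1 @ [w]) r w" using dpath_prefix by fastforce
    have "\<forall>z\<in>set (s1 @ [w]). z \<notin> ?B" using p2_outside p2 by auto
    then have "\<forall>q. dpath V A q r w \<longrightarrow> last (filter (\<lambda>z. z \<in> ?B) q) = x"
      using last_diblock_vertex_eq[OF AV rV xB xr w_path] by blast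
    moreover have "w \<in> V" "w \<notin> ?B" using w_path p2_outside p2 unfolding dpath_iff_walk by auto
    ultimately show "w \<in> Xset V A r x" unfolding Xset_def by blast
  qed
  then have "dpath ?X (A \<inter> ?X \<times> ?X) (x # p2) x c"
    using dpath_suffix[OF p[unfolded p_split]] walk_Int_Times[of A "x # p2" ?X]
    unfolding dpath_iff_walk by auto
  with p_split show ?thesis using that by blast
qed

section \<open>Parents dominate their children in the cut decomposition\<close>

lemma cut_decomp_reachable:
  assumes "cut_decomp V A r N par B" "v \<in> V"
  obtains p where "dpath V A p r v"
  using assms by (cases rule: cut_decomp.cases) blast

lemma cut_decomp_parent_dominates:
  assumes "cut_decomp V A r N par B"
  shows "A \<subseteq> V \<times> V \<Longrightarrow> N \<subseteq> V \<and> (\<forall>c\<in>N - {r}. par c \<noteq> c \<and> dominates V A r (par c) c)"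
  using assms
proof (induction rule: cut_decomp.induct)
  case (1 V r A B par Nx N)
  let ?X = "\<lambda>x. Xset V A r x \<union> {x}"
  have AV: "A \<subseteq> V \<times> V" by fact
  have IH: "Nx x \<subseteq> ?X x \<and> (\<forall>c\<in>Nx x - {x}. par c \<noteq> c \<and>
      dominates (?X x) (A \<inter> ?X x \<times> ?X x) x (par c) c)" if "x \<in> bottlenecks V A r" for x
    using 1(8) that by blast
  have bottleneck: "x \<in> V \<and> x \<in> diblock V A r \<and> x \<noteq> r" if "x \<in> bottlenecks V A r" for x
    using that diblock_subset[OF AV \<open>r \<in> V\<close>] unfolding bottlenecks_def by auto
  have "Xset V A r x \<subseteq> V" for x unfolding Xset_def by auto
  then have "N \<subseteq> V" using IH bottleneck \<open>N = _\<close> \<open>r \<in> V\<close> by blast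
  moreover have "par c \<noteq> c \<and> dominates V A r (par c) c" if c: "c \<in> N - {r}" for c
  proof -
    obtain x where xb: "x \<in> bottlenecks V A r" and cN: "c \<in> Nx x" using c \<open>N = _\<close> by auto
    have x: "x \<in> diblock V A r" "x \<noteq> r" using bottleneck[OF xb] by auto
    show ?thesis
    proof (cases "c = x")
      case True
      then show ?thesis using xb 1(6) x(2) dpath_hd_in_set unfolding dominates_def by metis
    next
      case False
      have cX: "c \<in> Xset V A r x" using IH[OF xb] cN False by auto
      have "par c \<in> set p" if p: "dpath V A p r c" for p
      proof -
        obtain p1 p2 where p_split: "p = p1 @ x # p2"
          and local_path: "dpath (?X x) (A \<inter> ?X x \<times> ?X x) (x # p2) x c"
          using split_dpath_into_Xset[OF AV \<open>r \<in> V\<close> x cX p] .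
        have "dominates (?X x) (A \<inter> ?X x \<times> ?X x) x (par c) c" using IH[OF xb] cN False by blast
        then have "par c \<in> set (x # p2)" using local_path unfolding dominates_def by blast
        then show ?thesis using p_split by auto
      qed
      then show ?thesis using IH[OF xb] cN False unfolding dominates_def by blast
    qed
  qed
  ultimately show ?case by blast
qed

lemma tree_edge_dominates:
  assumes "cut_decomp V A r N par B" "A \<subseteq> V \<times> V" "(a, c) \<in> tree_edges N par r"
  shows "dominates V A r a c" "a \<noteq> c" "c \<in> V"
  using assms cut_decomp_parent_dominates[OF assms(1,2)] unfolding tree_edges_def by auto

lemma tree_chain_dominates:
  assumes cd: "cut_decomp V A r N par B" and AV: "A \<subseteq> V \<times> V"
    and chain: "\<forall>k. Suc k < length xs \<longrightarrow> (xs ! k, xs ! Suc k) \<in> tree_edges N par r"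
  shows "i \<le> j \<Longrightarrow> j < length xs \<Longrightarrow> dominates V A r (xs ! i) (xs ! j)"
proof (induction j)
  case 0 then show ?case by (simp add: dominates_refl)
next
  case (Suc j)
  show ?case
  proof (cases "i = Suc j")
    case True then show ?thesis by (simp add: dominates_refl)
  next
    case False
    then have "dominates V A r (xs ! i) (xs ! j)" using Suc by simp
    moreover have "dominates V A r (xs ! j) (xs ! Suc j)"
      using tree_edge_dominates(1)[OF cd AV] chain Suc.prems by blast
    ultimately show ?thesis using dominates_trans by metis
  qed
qed

lemma tree_chain_nth_distinct:
  assumes cd: "cut_decomp V A r N par B" and AV: "A \<subseteq> V \<times> V"
    and chain: "\<forall>k. Suc k < length xs \<longrightarrow> (xs ! k, xs ! Suc k) \<in> tree_edges N par r"
    and ij: "i < j" "j < length xs"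
  shows "xs ! i \<noteq> xs ! j"
proof
  assume eq: "xs ! i = xs ! j"
  have edge: "(xs ! i, xs ! Suc i) \<in> tree_edges N par r" using chain ij by simp
  have "dominates V A r (xs ! Suc i) (xs ! i)"
    using tree_chain_dominates[OF cd AV chain, of "Suc i" j] ij eq by simp
  moreover obtain p where "dpath V A p r (xs ! Suc i)"
    using cut_decomp_reachable[OF cd tree_edge_dominates(3)[OF cd AV edge]] .
  ultimately have "xs ! i = xs ! Suc i"
    using dominates_antisym tree_edge_dominates(1)[OF cd AV edge] by metis
  then show False using tree_edge_dominates(2)[OF cd AV edge] by contradiction
qed

section \<open>Exchanging an arc of an out-branching\<close>

lemma out_branching_in_arc_unique:
  assumes ob: "out_branching V A s T" and "(a, v) \<in> T" "(b, v) \<in> T"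
  shows "a = b"
proof -
  have TV: "T \<subseteq> V \<times> V" and fV: "finite V" and card_T: "card T = card V - 1"
    and root: "{v \<in> V. \<not> (\<exists>u. (u, v) \<in> T)} = {s}"
    using ob unfolding out_branching_def oriented_tree_def by auto
  have fT: "finite T" using TV fV finite_subset by blast
  have "snd ` T = V - {s}" using TV root by force
  moreover have "s \<in> V" using root by blast
  then have "card (V - {s}) = card T" using card_T by (simp add: card_Diff_singleton)
  ultimately have "inj_on snd T" using eq_card_imp_inj_on[OF fT] by metis
  then show ?thesis using inj_onD[of snd T "(a, v)" "(b, v)"] assms(2,3) by simp
qed

lemma out_branching_root_no_in_arc: "out_branching V A s T \<Longrightarrow> (a, s) \<notin> T"
  unfolding out_branching_def by blast

lemma out_branching_reaches:
  assumes ob: "out_branching V A s T" and v: "v \<in> V"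
  shows "(s, v) \<in> T\<^sup>*"
proof -
  have "(s, v) \<in> (T \<union> T\<inverse>)\<^sup>*" using ob v unfolding out_branching_def oriented_tree_def by blast
  then show ?thesis
  proof (induction rule: rtrancl_induct)
    case (step y z)
    show ?case
    proof (cases "(y, z) \<in> T")
      case True then show ?thesis using step.IH by (simp add: rtrancl_into_rtrancl)
    next
      case False
      then have zy: "(z, y) \<in> T" using step.hyps(2) by auto
      then have "y \<noteq> s" using out_branching_root_no_in_arc[OF ob] by blast
      then obtain y' where "(s, y') \<in> T\<^sup>*" "(y', y) \<in> T" using step.IH by (metis rtranclE)
      then show ?thesis using out_branching_in_arc_unique[OF ob] zy by metis
    qed
  qed simp
qed

lemma out_branching_acyclic:
  assumes ob: "out_branching V A s T" shows "(v, v) \<notin> T\<^sup>+"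
proof
  assume vv: "(v, v) \<in> T\<^sup>+"
  have "v \<in> V" using vv ob unfolding out_branching_def oriented_tree_def by (auto dest: tranclD)
  have "(w, w) \<notin> T\<^sup>+" if "(s, w) \<in> T\<^sup>*" for w
    using that
  proof (induction rule: rtrancl_induct)
    case base
    show ?case using out_branching_root_no_in_arc[OF ob] by (metis tranclD2)
  next
    case (step y z)
    show ?case
    proof
      assume "(z, z) \<in> T\<^sup>+"
      then obtain y' where "(z, y') \<in> T\<^sup>*" "(y', z) \<in> T" by (metis tranclD2)
      moreover have "y' = y" using out_branching_in_arc_unique[OF ob calculation(2) step.hyps(2)] .
      ultimately have "(y, y) \<in> T\<^sup>+" using step.hyps(2) by (metis rtrancl_into_trancl2)
      then show False using step.IH by simp
    qed
  qed
  then show False using out_branching_reaches[OF ob \<open>v \<in> V\<close>] vv by blast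
qed

lemma rtrancl_path_walk:
  "rtrancl_path (\<lambda>a b. (a, b) \<in> T) x xs y \<Longrightarrow> walk T (x # xs) \<and> last (x # xs) = y \<and> set xs \<subseteq> Range T"
  by (induction rule: rtrancl_path.induct) (auto simp: neq_Nil_conv)

lemma out_branching_ancestor_if_dominates:
  assumes ob: "out_branching V A s T" and dom: "dominates V A s x v" and v: "v \<in> V"
  shows "(x, v) \<in> T\<^sup>*"
proof -
  have TA: "T \<subseteq> A" and TV: "T \<subseteq> V \<times> V" and sV: "s \<in> V"
    using ob unfolding out_branching_def oriented_tree_def by auto
  have "(\<lambda>a b. (a, b) \<in> T)\<^sup>*\<^sup>* s v"
    using out_branching_reaches[OF ob v] by (simp add: rtranclp_rtrancl_eq)
  then obtain xs where "rtrancl_path (\<lambda>a b. (a, b) \<in> T) s xs v" "distinct (s # xs)"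
    using rtranclp_eq_rtrancl_path rtrancl_path_distinct by metis
  then have T_path: "dpath V T (s # xs) s v"
    using rtrancl_path_walk[of T s xs v] TV sV unfolding dpath_iff_walk by auto
  then have "x \<in> set (s # xs)" using dom dpath_mono[OF _ TA] unfolding dominates_def by blast
  then obtain p2 where "dpath V T (x # p2) x v" using split_dpath[OF T_path] by metis
  then show ?thesis using walk_rtrancl unfolding dpath_iff_walk by metis
qed

lemma rtrancl_Diff_arc_into_source: "(u, v) \<in> T\<^sup>* \<Longrightarrow> (u, v) \<in> (T - {(a, u)})\<^sup>*"
proof (induction rule: rtrancl_induct)
  case (step y z)
  then show ?case by (cases "z = u") (auto intro: rtrancl_into_rtrancl)
qed simp

lemma rtrancl_Diff_arc_into_unreachable:
  "(s, v) \<in> T\<^sup>* \<Longrightarrow> (u, v) \<notin> T\<^sup>* \<Longrightarrow> (s, v) \<in> (T - {(a, u)})\<^sup>*"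
proof (induction rule: rtrancl_induct)
  case (step y z)
  then have "(u, y) \<notin> T\<^sup>*" "z \<noteq> u" by (auto intro: rtrancl_into_rtrancl)
  then show ?case using step by (auto intro: rtrancl_into_rtrancl)
qed simp

lemma exchange_reaches:
  assumes ob: "out_branching V A s T" and xi: "xi \<in> V" and na: "(u, xi) \<notin> T\<^sup>*" and v: "v \<in> V"
  shows "(s, v) \<in> (insert (xi, u) (T - {(xj, u)}))\<^sup>*"
proof -
  let ?T' = "insert (xi, u) (T - {(xj, u)})"
  have mono: "(T - {(xj, u)})\<^sup>* \<subseteq> ?T'\<^sup>*" by (rule rtrancl_mono) blast
  show ?thesis
  proof (cases "(u, v) \<in> T\<^sup>*")
    case True
    have "(s, xi) \<in> ?T'\<^sup>*"
      using rtrancl_Diff_arc_into_unreachable[OF out_branching_reaches[OF ob xi] na] mono by blast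
    then have "(s, u) \<in> ?T'\<^sup>*" by (simp add: rtrancl_into_rtrancl)
    moreover have "(u, v) \<in> ?T'\<^sup>*" using rtrancl_Diff_arc_into_source[OF True] mono by blast
    ultimately show ?thesis by simp
  next
    case False
    then show ?thesis
      using rtrancl_Diff_arc_into_unreachable[OF out_branching_reaches[OF ob v]] mono by blast
  qed
qed

lemma connected_if_reaches:
  assumes "\<forall>v\<in>V. (s, v) \<in> T\<^sup>*" "a \<in> V" "b \<in> V"
  shows "(a, b) \<in> (T \<union> T\<inverse>)\<^sup>*"
proof -
  have reach: "(s, v) \<in> (T \<union> T\<inverse>)\<^sup>*" if "v \<in> V" for v
    using assms(1) that rtrancl_mono[of T "T \<union> T\<inverse>"] by blast
  have "(a, s) \<in> ((T \<union> T\<inverse>)\<inverse>)\<^sup>*" using reach[OF assms(2)] by (rule rtrancl_converseI)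
  moreover have "(T \<union> T\<inverse>)\<inverse> = T \<union> T\<inverse>" by auto
  ultimately show ?thesis using reach[OF assms(3)] by simp
qed

lemma out_branching_exchange:
  assumes ob: "out_branching V A s T" and dg: "digraph V A"
    and e: "(xj, u) \<in> T" and e': "(xi, u) \<in> A" and xij: "xi \<noteq> xj" and na: "(u, xi) \<notin> T\<^sup>*"
  shows "out_branching V (A - {(xj, u)}) s (insert (xi, u) (T - {(xj, u)}))"
proof -
  define T' where "T' = insert (xi, u) (T - {(xj, u)})"
  have TV: "T \<subseteq> V \<times> V" and fV: "finite V" and card_T: "card T = card V - 1"
    and no_2cycle: "\<forall>(a, b)\<in>T. a \<noteq> b \<and> (b, a) \<notin> T" and TA: "T \<subseteq> A"
    and root: "{v \<in> V. \<not> (\<exists>w. (w, v) \<in> T)} = {s}"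
    using ob unfolding out_branching_def oriented_tree_def by auto
  have uxi: "u \<in> V" "xi \<in> V" "xi \<noteq> u" using e' dg unfolding digraph_def by auto
  have e'T: "(xi, u) \<notin> T" using out_branching_in_arc_unique[OF ob e] xij by blast
  have "finite T" using TV fV finite_subset by blast
  then have "card T' = Suc (card (T - {(xj, u)}))" using e'T unfolding T'_def by simp
  also have "\<dots> = card T" using card_Suc_Diff1[OF \<open>finite T\<close> e] .
  finally have card': "card T' = card V - 1" using card_T by simp
  have "(u, xi) \<notin> T" using na by blast
  then have no_2cycle': "\<forall>(a, b)\<in>T'. a \<noteq> b \<and> (b, a) \<notin> T'"
    using no_2cycle uxi(3) unfolding T'_def by auto
  have "\<forall>v\<in>V. (s, v) \<in> T'\<^sup>*"
    using exchange_reaches[OF ob uxi(2) na] unfolding T'_def by blast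
  then have conn': "\<forall>a\<in>V. \<forall>b\<in>V. (a, b) \<in> (T' \<union> T'\<inverse>)\<^sup>*" using connected_if_reaches by metis
  have root': "{v \<in> V. \<not> (\<exists>w. (w, v) \<in> T')} = {s}" using root e unfolding T'_def by auto
  have T'V: "T' \<subseteq> V \<times> V" and T'A: "T' \<subseteq> A - {(xj, u)}"
    using TV TA uxi e' xij unfolding T'_def by auto
  have "V \<noteq> {}" using root by blast
  then have "oriented_tree V T'" unfolding oriented_tree_def
    using fV T'V no_2cycle' card' conn' by (intro conjI) assumption+
  then show ?thesis using T'A root' unfolding T'_def out_branching_def by blast
qed

lemma positive_instance_mono:
  assumes "positive_instance V A' s t k" "A' \<subseteq> A" shows "positive_instance V A s t k"
proof -
  obtain Tp Tm where "out_branching V A' s Tp" "in_branching V A' t Tm" "int (card (Tp - Tm)) \<ge> k"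
    using assms(1) unfolding positive_instance_def by blast
  moreover from this assms(2) have "out_branching V A s Tp" "in_branching V A t Tm"
    unfolding out_branching_def in_branching_def by auto
  ultimately show ?thesis unfolding positive_instance_def by blast
qed

lemma positive_instance_exchange:
  assumes dg: "digraph V A" and e: "(xj, u) \<in> R_t V A t" and e': "(xi, u) \<in> R_t V A t"
    and xij: "xi \<noteq> xj" and dom: "dominates V A s xi xj"
    and pos: "positive_instance V A s t k"
  shows "positive_instance V (A - {(xj, u)}) s t k"
proof -
  obtain Tp Tm where ob: "out_branching V A s Tp" and ib: "in_branching V A t Tm"
    and k: "int (card (Tp - Tm)) \<ge> k"
    using pos unfolding positive_instance_def by blast
  have "(xj, u) \<notin> Tm" "(xi, u) \<notin> Tm" using e e' ib unfolding R_t_def by blast+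
  then have ib': "in_branching V (A - {(xj, u)}) t Tm" using ib unfolding in_branching_def by blast
  show ?thesis
  proof (cases "(xj, u) \<in> Tp")
    case False
    then have "out_branching V (A - {(xj, u)}) s Tp" using ob unfolding out_branching_def by blast
    then show ?thesis using ib' k unfolding positive_instance_def by blast
  next
    case True
    define Tp' where "Tp' = insert (xi, u) (Tp - {(xj, u)})"
    have "xj \<in> V" using e dg unfolding R_t_def digraph_def by auto
    then have "(xi, xj) \<in> Tp\<^sup>*" using out_branching_ancestor_if_dominates[OF ob dom] by blast
    have not_ancestor: "(u, xi) \<notin> Tp\<^sup>*"
    proof
      assume "(u, xi) \<in> Tp\<^sup>*"
      then have "(u, xj) \<in> Tp\<^sup>*" using \<open>(xi, xj) \<in> Tp\<^sup>*\<close> by (rule rtrancl_trans)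
      then have "(u, u) \<in> Tp\<^sup>+" using True by (rule rtrancl_into_trancl1)
      then show False using out_branching_acyclic[OF ob] by blast
    qed
    have e'A: "(xi, u) \<in> A" using e' unfolding R_t_def by blast
    have ob': "out_branching V (A - {(xj, u)}) s Tp'"
      using out_branching_exchange[OF ob dg True e'A xij not_ancestor] unfolding Tp'_def .
    have "(xi, u) \<notin> Tp" using out_branching_in_arc_unique[OF ob True] xij by blast
    moreover have "Tp \<subseteq> V \<times> V" "finite V" using ob unfolding out_branching_def oriented_tree_def by auto
    then have "finite Tp" using finite_subset by blast
    moreover have "Tp' - Tm = insert (xi, u) ((Tp - Tm) - {(xj, u)})"
      using \<open>(xi, u) \<notin> Tm\<close> unfolding Tp'_def by auto
    ultimately have "card (Tp' - Tm) = Suc (card ((Tp - Tm) - {(xj, u)}))" by simp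
    also have "\<dots> = card (Tp - Tm)"
      using card_Suc_Diff1[of "Tp - Tm" "(xj, u)"] \<open>finite Tp\<close> True \<open>(xj, u) \<notin> Tm\<close> by simp
    finally have "card (Tp' - Tm) = card (Tp - Tm)" .
    then show ?thesis using ob' ib' k unfolding positive_instance_def by (metis (no_types))
  qed
qed

theorem lemma15:
  fixes V :: "'a set" and A :: "('a \<times> 'a) set" and s t u :: 'a and k :: int
    and N :: "'a set" and par :: "'a \<Rightarrow> 'a" and B :: "'a \<Rightarrow> 'a set"
    and xs :: "'a list" and i j :: nat
  assumes "digraph V A" and "s \<in> V" and "t \<in> V"
    and "reduced_instance V A s t"
    and "cut_decomp V A s N par B"
    and "degenerate_path N par B s xs"
    and "i < j" and "j < length xs"
    and "(xs ! i, u) \<in> Aplus A N par B s xs \<inter> R_t V A t"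
    and "(xs ! j, u) \<in> Aplus A N par B s xs \<inter> R_t V A t"
  shows "positive_instance V A s t k \<longleftrightarrow> positive_instance V (A - {(xs ! j, u)}) s t k"
proof -
  have AV: "A \<subseteq> V \<times> V" using assms(1) unfolding digraph_def by blast
  have chain: "\<forall>k. Suc k < length xs \<longrightarrow> (xs ! k, xs ! Suc k) \<in> tree_edges N par s"
    using assms(6) unfolding degenerate_path_def by blast
  have "xs ! i \<noteq> xs ! j" using tree_chain_nth_distinct[OF assms(5) AV chain assms(7,8)] .
  moreover have "dominates V A s (xs ! i) (xs ! j)"
    using tree_chain_dominates[OF assms(5) AV chain] assms(7,8) by simp
  moreover have "(xs ! i, u) \<in> R_t V A t" "(xs ! j, u) \<in> R_t V A t" using assms(9,10) by blast+
  ultimately show ?thesis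
    using positive_instance_exchange[OF assms(1)]
      positive_instance_mono[of V "A - {(xs ! j, u)}" s t k A] by blast
qed

end
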